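(* For all integers $n > 2$, $\det'(K_n) = \left\lfloor \frac{2n}{3} \right\rfloor$.
   Context: $K_n$ is the complete graph on $n$ vertices. For a graph $G$ with at most one isolated vertex and no component isomorphic to $K_2$, an edge subset $T$ is an edge determining set if the only automorphism $\phi$ of $G$ satisfying $\{\phi(u),\phi(v)\}=\{u,v\}$ for all $\{u,v\}\in T$ is the identity; the determining index $\det'(G)$ is the minimum size of an edge determining set. *)

theory Defs
  imports "HOL-Combinatorics.Permutations"
begin

definition graph_aut :: "'a set \<Rightarrow> 'a set set \<Rightarrow> ('a \<Rightarrow> 'a) \<Rightarrow> bool" where
  "graph_aut V E \<phi> \<longleftrightarrow> \<phi> permutes V \<and>
     (\<forall>u\<in>V. \<forall>v\<in>V. {u, v} \<in> E \<longleftrightarrow> {\<phi> u, \<phi> v} \<in> E)"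

definition edge_determining :: "'a set \<Rightarrow> 'a set set \<Rightarrow> 'a set set \<Rightarrow> bool" where
  "edge_determining V E T \<longleftrightarrow> T \<subseteq> E \<and>
     (\<forall>\<phi>. graph_aut V E \<phi> \<and> (\<forall>e\<in>T. \<phi> ` e = e) \<longrightarrow> \<phi> = id)"

definition det_index :: "'a set \<Rightarrow> 'a set set \<Rightarrow> nat" where
  "det_index V E = (LEAST k. \<exists>T. edge_determining V E T \<and> finite T \<and> card T = k)"

definition K_vertices :: "nat \<Rightarrow> nat set" where
  "K_vertices n = {0..<n}"

definition K_edges :: "nat \<Rightarrow> nat set set" where
  "K_edges n = {{u, v} | u v. u < n \<and> v < n \<and> u \<noteq> v}"

end

theory Submission
  imports Defs
begin

text \<open>Every permutation of the vertices is an automorphism of \<open>K\<^sub>n\<close>, so a determining set \<open>T\<close>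
  must rule out every transposition \<open>(a b)\<close> that stabilises all edges of \<open>T\<close>. Hence at most one
  vertex is missed by \<open>T\<close>, and no edge of \<open>T\<close> is an isolated edge of the graph \<open>(\<Union>T, T)\<close>.
  In that graph every vertex has degree at least one and the leaves inject into the edges, so
  the handshake lemma gives \<open>2 |\<Union>T| \<le> 2 |T| + #leaves \<le> 3 |T|\<close>, i.e. \<open>2n \<le> 3 |T| + 2\<close>.
  Conversely, paths \<open>3i \<midarrow> 3i+1 \<midarrow> 3i+2\<close> on consecutive triples, plus the edge \<open>{1, n-1}\<close> when
  \<open>n mod 3 = 2\<close>, leave only one vertex uncovered and determine \<open>K\<^sub>n\<close> with \<open>\<lfloor>2n/3\<rfloor>\<close> edges.\<close>

definition deg :: "'a set set \<Rightarrow> 'a \<Rightarrow> nat" where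
  "deg T v = card {e \<in> T. v \<in> e}"

lemma deg_pos:
  assumes "finite T" "v \<in> \<Union>T"
  shows "deg T v > 0"
  using assms by (auto simp: deg_def card_gt_0_iff)

lemma deg_eq_1_iff:
  assumes "e \<in> T" "v \<in> e"
  shows "deg T v = 1 \<longleftrightarrow> {e' \<in> T. v \<in> e'} = {e}"
proof
  assume "deg T v = 1"
  then obtain x where "{e' \<in> T. v \<in> e'} = {x}" by (auto simp: deg_def card_1_singleton_iff)
  then show "{e' \<in> T. v \<in> e'} = {e}"
    using assms by (metis (mono_tags, lifting) mem_Collect_eq singletonD)
qed (simp add: deg_def)

lemma sum_deg_eq_sum_card:
  assumes "finite T" "\<forall>e\<in>T. finite e"
  shows "(\<Sum>v\<in>\<Union>T. deg T v) = (\<Sum>e\<in>T. card e)"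
proof -
  have fin: "finite (\<Union>T)" using assms by blast
  have "(\<Sum>v\<in>\<Union>T. deg T v) = (\<Sum>v\<in>\<Union>T. \<Sum>e\<in>T. if v \<in> e then 1 else 0)"
    using assms(1) by (simp add: deg_def sum.If_cases Int_def conj_commute)
  also have "\<dots> = (\<Sum>e\<in>T. \<Sum>v\<in>\<Union>T. if v \<in> e then 1 else 0)"
    by (rule sum.swap)
  also have "\<dots> = (\<Sum>e\<in>T. card e)"
    using fin by (intro sum.cong) (auto simp: sum.If_cases Int_absorb1 Union_upper)
  finally show ?thesis .
qed

lemma card_leaves_le:
  assumes fin: "finite T" and two: "\<forall>e\<in>T. card e = 2"
    and no_isolated_edge: "\<forall>e\<in>T. \<exists>v\<in>e. deg T v \<noteq> 1"
  shows "card {v \<in> \<Union>T. deg T v = 1} \<le> card T"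
proof -
  let ?L = "{v \<in> \<Union>T. deg T v = 1}"
  define edge_at where "edge_at v = the_elem {e \<in> T. v \<in> e}" for v
  have edge_at: "edge_at v \<in> T \<and> v \<in> edge_at v" if leaf: "v \<in> ?L" for v
  proof -
    obtain e where "e \<in> T" "v \<in> e" using leaf by auto
    then have "{e' \<in> T. v \<in> e'} = {e}" using deg_eq_1_iff[of e T v] leaf by simp
    then show ?thesis using \<open>e \<in> T\<close> \<open>v \<in> e\<close> by (simp add: edge_at_def)
  qed
  have "inj_on edge_at ?L"
  proof (rule inj_onI, rule ccontr)
    fix v w assume v: "v \<in> ?L" and w: "w \<in> ?L" and same: "edge_at v = edge_at w" and "v \<noteq> w"
    let ?e = "edge_at v"
    have "?e \<in> T" "{v, w} \<subseteq> ?e" using edge_at[OF v] edge_at[OF w] same by auto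
    then have "card ?e = 2" "finite ?e" using two by (auto simp: card_ge_0_finite)
    then have "?e = {v, w}"
      using card_subset_eq[OF \<open>finite ?e\<close> \<open>{v, w} \<subseteq> ?e\<close>] \<open>v \<noteq> w\<close> by simp
    then show False
      using no_isolated_edge \<open>?e \<in> T\<close> v w by auto
  qed
  moreover have "edge_at ` ?L \<subseteq> T" using edge_at by blast
  ultimately show ?thesis by (rule card_inj_on_le[OF _ _ fin])
qed

lemma card_Union_edges_le:
  assumes fin: "finite T" and two: "\<forall>e\<in>T. card e = 2"
    and "\<forall>e\<in>T. \<exists>v\<in>e. deg T v \<noteq> 1"
  shows "2 * card (\<Union>T) \<le> 3 * card T"
proof -
  let ?D = "\<Union>T"
  let ?L = "{v \<in> ?D. deg T v = 1}"
  have fin_edges: "\<forall>e\<in>T. finite e" using two card.infinite by fastforce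
  then have finD: "finite ?D" using fin by blast
  have LD: "?L \<subseteq> ?D" by blast
  have "(\<Sum>v\<in>?D. deg T v) = 2 * card T"
    using sum_deg_eq_sum_card[OF fin fin_edges] two by simp
  moreover have "(\<Sum>v\<in>?D. deg T v) = (\<Sum>v\<in>?L. deg T v) + (\<Sum>v\<in>?D - ?L. deg T v)"
    using sum.subset_diff[OF LD finD, of "deg T"] by linarith
  moreover have "(\<Sum>v\<in>?L. deg T v) = card ?L" by simp
  moreover have "2 * card (?D - ?L) \<le> (\<Sum>v\<in>?D - ?L. deg T v)"
  proof -
    have "2 \<le> deg T v" if "v \<in> ?D - ?L" for v
    proof -
      have "v \<in> ?D" "deg T v \<noteq> 1" using that by auto
      then show ?thesis using deg_pos[OF fin, of v] by linarith
    qed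
    then show ?thesis using sum_bounded_below[of "?D - ?L" 2 "deg T"] by (simp add: mult.commute)
  qed
  moreover have "card (?D - ?L) = card ?D - card ?L" "card ?L \<le> card ?D"
    using card_Diff_subset[OF finite_subset[OF LD finD] LD] card_mono[OF finD LD] by simp_all
  ultimately show ?thesis using card_leaves_le[OF assms] by linarith
qed

lemma edge_determining_transpose_trivial:
  assumes "edge_determining V E T" "graph_aut V E (Transposition.transpose a b)"
    and "\<forall>e\<in>T. a \<in> e \<longleftrightarrow> b \<in> e"
  shows "a = b"
proof -
  have "\<forall>e\<in>T. Transposition.transpose a b ` e = e" using assms(3) by simp
  then have "Transposition.transpose a b = id"
    using assms(1,2) unfolding edge_determining_def by blast
  then show ?thesis by (simp add: transpose_eq_id_iff)
qed

lemma insert_K_edges_iff: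
  "u < n \<Longrightarrow> v < n \<Longrightarrow> {u, v} \<in> K_edges n \<longleftrightarrow> u \<noteq> v"
  unfolding K_edges_def by (auto simp: doubleton_eq_iff)

lemma K_edgesE:
  assumes "e \<in> K_edges n"
  obtains u v where "e = {u, v}" "u \<noteq> v" "u < n" "v < n"
  using assms unfolding K_edges_def by auto

lemma permutes_imp_graph_aut_K:
  assumes perm: "\<phi> permutes K_vertices n"
  shows "graph_aut (K_vertices n) (K_edges n) \<phi>"
proof -
  have "{u, v} \<in> K_edges n \<longleftrightarrow> {\<phi> u, \<phi> v} \<in> K_edges n"
    if "u < n" "v < n" for u v
  proof -
    have "\<phi> u < n" "\<phi> v < n"
      using that permutes_in_image[OF perm] by (auto simp: K_vertices_def)
    then show ?thesis
      using that insert_K_edges_iff[of u n v] insert_K_edges_iff[of "\<phi> u" n "\<phi> v"]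
        permutes_inj[OF perm] by (simp add: inj_eq)
  qed
  then show ?thesis using perm by (auto simp: graph_aut_def K_vertices_def)
qed

lemma edge_determining_K_lower_bound:
  assumes det: "edge_determining (K_vertices n) (K_edges n) T" and fin: "finite T"
  shows "2 * n \<le> 3 * card T + 2"
proof -
  let ?V = "K_vertices n" and ?D = "\<Union>T"
  have TE: "T \<subseteq> K_edges n" using det by (simp add: edge_determining_def)
  have transposition_trivial: "a = b"
    if "a < n" "b < n" "\<forall>e\<in>T. a \<in> e \<longleftrightarrow> b \<in> e" for a b
    using that by (intro edge_determining_transpose_trivial[OF det] permutes_imp_graph_aut_K
        permutes_swap_id) (auto simp: K_vertices_def)
  have two: "\<forall>e\<in>T. card e = 2"
    using TE by (auto elim!: K_edgesE)
  have DV: "?D \<subseteq> ?V" using TE by (auto simp: K_vertices_def K_edges_def)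
  have "card (?V - ?D) \<le> 1"
    using transposition_trivial by (auto simp: card_le_Suc0_iff_eq K_vertices_def)
  then have uncovered: "n \<le> card ?D + 1"
    using card_Diff_subset[OF finite_subset[OF DV] DV] card_mono[of ?V ?D] DV
    by (simp add: K_vertices_def)
  have "\<forall>e\<in>T. \<exists>v\<in>e. deg T v \<noteq> 1"
  proof (rule ballI, rule ccontr)
    fix e assume e: "e \<in> T" and leaves: "\<not> (\<exists>v\<in>e. deg T v \<noteq> 1)"
    obtain a b where ab: "e = {a, b}" "a \<noteq> b" "a < n" "b < n"
      using e TE by (blast elim: K_edgesE)
    have only_e: "e' \<in> T \<and> v \<in> e' \<longleftrightarrow> e' = e" if "v \<in> e" for v e'
    proof -
      have "{e' \<in> T. v \<in> e'} = {e}" using leaves that deg_eq_1_iff[OF e that] by auto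
      then show ?thesis by (metis (mono_tags, lifting) mem_Collect_eq singleton_iff)
    qed
    have "\<forall>e'\<in>T. a \<in> e' \<longleftrightarrow> b \<in> e'"
      using only_e[of a] only_e[of b] ab(1) by blast
    then show False using transposition_trivial ab by blast
  qed
  then have "2 * card ?D \<le> 3 * card T"
    using card_Union_edges_le[OF fin two] by blast
  then show ?thesis using uncovered by linarith
qed

lemma inj_fix_adjacent_edges:
  assumes "inj \<phi>" "\<phi> ` {a, c} = {a, c}" "\<phi> ` {c, b} = {c, b}" "a \<noteq> b" "a \<noteq> c" "b \<noteq> c"
  shows "\<phi> a = a \<and> \<phi> b = b \<and> \<phi> c = c"
proof -
  have c: "\<phi> c = c" using assms(2-6) by blast
  have "\<phi> a \<noteq> \<phi> c" "\<phi> b \<noteq> \<phi> c" using assms(1,5,6) by (meson injD)+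
  moreover have "\<phi> a \<in> {a, c}" "\<phi> b \<in> {c, b}" using assms(2,3) by blast+
  ultimately show ?thesis using c by auto
qed

definition K_determining_edges :: "nat \<Rightarrow> nat set set" where
  "K_determining_edges n =
     (\<lambda>i. {3*i, 3*i+1}) ` {..<n div 3} \<union> (\<lambda>i. {3*i+1, 3*i+2}) ` {..<n div 3}
     \<union> (if n mod 3 = 2 then {{1, n - 1}} else {})"

lemma finite_K_determining_edges: "finite (K_determining_edges n)"
  unfolding K_determining_edges_def by simp

lemma card_K_determining_edges_le: "card (K_determining_edges n) \<le> 2 * n div 3"
proof -
  let ?m = "n div 3"
  let ?A = "(\<lambda>i. {3*i, 3*i+1}) ` {..<?m}" and ?B = "(\<lambda>i. {3*i+1, 3*i+2}) ` {..<?m}"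
  let ?C = "(if n mod 3 = 2 then {{1, n - 1}} else {}) :: nat set set"
  have "card (K_determining_edges n) \<le> card ?A + card ?B + card ?C"
    unfolding K_determining_edges_def
    by (meson card_Un_le add_right_mono le_trans)
  also have "\<dots> \<le> ?m + ?m + (if n mod 3 = 2 then 1 else 0)"
    using card_image_le[of "{..<?m}" "\<lambda>i. {3*i, 3*i+1}"]
      card_image_le[of "{..<?m}" "\<lambda>i. {3*i+1, 3*i+2}"] by simp
  also have "\<dots> = 2 * n div 3" by presburger
  finally show ?thesis .
qed

lemma K_determining_edges_subset:
  assumes "n > 2"
  shows "K_determining_edges n \<subseteq> K_edges n"
proof
  fix e assume "e \<in> K_determining_edges n"
  then consider (first) i where "i < n div 3" "e = {3*i, 3*i+1}"
    | (second) i where "i < n div 3" "e = {3*i+1, 3*i+2}"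
    | (extra) "n mod 3 = 2" "e = {1, n - 1}"
    unfolding K_determining_edges_def by (auto split: if_splits)
  then show "e \<in> K_edges n"
  proof cases
    case (first i)
    then show ?thesis using insert_K_edges_iff[of "3*i" n "3*i+1"] by simp
  next
    case (second i)
    then show ?thesis using insert_K_edges_iff[of "3*i+1" n "3*i+2"] by simp
  next
    case extra
    then show ?thesis using assms insert_K_edges_iff[of 1 n "n - 1"] by simp
  qed
qed

lemma edge_determining_K_determining_edges:
  assumes "n > 2"
  shows "edge_determining (K_vertices n) (K_edges n) (K_determining_edges n)"
  unfolding edge_determining_def
proof (intro conjI allI impI K_determining_edges_subset[OF assms])
  fix \<phi> assume "graph_aut (K_vertices n) (K_edges n) \<phi> \<and> (\<forall>e\<in>K_determining_edges n. \<phi> ` e = e)"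
  then have perm: "\<phi> permutes {0..<n}"
    and stab: "\<And>e. e \<in> K_determining_edges n \<Longrightarrow> \<phi> ` e = e"
    by (auto simp: graph_aut_def K_vertices_def)
  have inj: "inj \<phi>" using perm by (rule permutes_inj)
  let ?m = "n div 3"
  have triple: "\<phi> (3*i) = 3*i \<and> \<phi> (3*i+2) = 3*i+2 \<and> \<phi> (3*i+1) = 3*i+1" if "i < ?m" for i
    using that by (intro inj_fix_adjacent_edges[OF inj] stab) (auto simp: K_determining_edges_def)
  have fixed: "\<phi> y = y" if "y \<noteq> 3 * ?m" for y
  proof -
    have "n = 3 * ?m + n mod 3" "n mod 3 < 3" by simp_all
    then consider "y \<ge> n" | "y < 3 * ?m" | "n mod 3 = 2" "y = n - 1"
      using \<open>y \<noteq> 3 * ?m\<close> by linarith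
    then show ?thesis
    proof cases
      case 1
      then show ?thesis using permutes_not_in[OF perm] by simp
    next
      case 2
      then have "y div 3 < ?m" "y = 3 * (y div 3) \<or> y = 3 * (y div 3) + 1 \<or> y = 3 * (y div 3) + 2"
        by linarith+
      then show ?thesis using triple[of "y div 3"] by auto
    next
      case 3
      have "\<phi> ` {1, y} = {1, y}" using 3 by (intro stab) (simp add: K_determining_edges_def)
      then have "\<phi> y \<in> {1, y}" by blast
      moreover have "\<phi> y \<noteq> \<phi> 1" using inj 3 assms by (simp add: inj_eq)
      moreover have "\<phi> 1 = 1" using triple[of 0] 3 assms by simp
      ultimately show ?thesis by auto
    qed
  qed
  have "\<phi> (3 * ?m) = 3 * ?m"
  proof (rule ccontr)
    assume moved: "\<phi> (3 * ?m) \<noteq> 3 * ?m"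
    then have "\<phi> (\<phi> (3 * ?m)) = \<phi> (3 * ?m)" by (rule fixed)
    then show False using moved inj by (simp add: inj_eq)
  qed
  then have "\<phi> y = y" for y using fixed by (cases "y = 3 * ?m") auto
  then show "\<phi> = id" by (simp add: fun_eq_iff)
qed

theorem theorem8:
  fixes n :: nat
  assumes "n > 2"
  shows "det_index (K_vertices n) (K_edges n) = (2 * n) div 3"
  unfolding det_index_def
proof (rule Least_equality)
  let ?T = "K_determining_edges n"
  have "card ?T = 2 * n div 3"
    using card_K_determining_edges_le[of n] finite_K_determining_edges
      edge_determining_K_lower_bound[OF edge_determining_K_determining_edges[OF assms]
        finite_K_determining_edges] by linarith
  then show "\<exists>T. edge_determining (K_vertices n) (K_edges n) T \<and> finite T \<and> card T = 2 * n div 3"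
    using edge_determining_K_determining_edges[OF assms] finite_K_determining_edges by blast
next
  fix k assume "\<exists>T. edge_determining (K_vertices n) (K_edges n) T \<and> finite T \<and> card T = k"
  then show "2 * n div 3 \<le> k" using edge_determining_K_lower_bound by fastforce
qed

end
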